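(* In the setting of the context (with $g$ unimodal, symmetric about $0$ and logconcave), letting $d_2=G^{-1}\big(1-\frac{\alpha^2}{1+\alpha}\big)-d_0$, one has $$\sup_{\theta\ge0}C(\theta)\ \ge\ C(d_2)\ \ge\ G(x_1(d_2))-\frac{\alpha^2}{1+\alpha}.$$
   Context: Let $g$ be a probability density on $\mathbb{R}$, unimodal and symmetric about $0$ (i.e. $g(z)=g(-z)$ and $g$ nonincreasing on $[0,\infty)$), and logconcave ($\log g$ concave on its support), with cdf $G$ and quantile function $G^{-1}(t)=\inf\{x:G(x)\ge t\}$. Let $X$ have density $g(x-\theta)$, $\theta\ge0$, and $P_\theta$ the corresponding probability. Fix $\alpha\in(0,1)$, and set $d_0=G^{-1}(\tfrac1{1+\alpha})$. The HPD credible interval (prior $1_{[0,\infty)}(\theta)$, credibility $1-\alpha$) is $[l(X),u(X)]$ with $l(x)=\{x-G^{-1}(\tfrac12+\tfrac{1-\alpha}2G(x))\}1_{(d_0,\infty)}(x)$, $u(x)=x-G^{-1}(\alpha G(x))$ for $x\le d_0$ and $u(x)=x+G^{-1}(\tfrac12+\tfrac{1-\alpha}2G(x))$ for $x>d_0$. The frequentist coverage is $C(\theta)=P_\theta(l(X)\le\theta\le u(X))$. Let $l^{-1}(\theta)=\sup\{x:\theta\ge l(x)\}$ and $x_1(\theta)=l^{-1}(\theta)-\theta$ for $\theta\ge0$. *)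

theory Defs
  imports "HOL-Analysis.Analysis"
begin

definition cdfG :: "(real \<Rightarrow> real) \<Rightarrow> real \<Rightarrow> real" where
  "cdfG g x = measure (density lborel (\<lambda>t. ennreal (g t))) {..x}"

definition quantG :: "(real \<Rightarrow> real) \<Rightarrow> real \<Rightarrow> real" where
  "quantG g t = Inf {x. cdfG g x \<ge> t}"

definition d0 :: "(real \<Rightarrow> real) \<Rightarrow> real \<Rightarrow> real" where
  "d0 g \<alpha> = quantG g (1 / (1 + \<alpha>))"

definition lHPD :: "(real \<Rightarrow> real) \<Rightarrow> real \<Rightarrow> real \<Rightarrow> real" where
  "lHPD g \<alpha> x = (if x > d0 g \<alpha>
      then x - quantG g (1/2 + (1 - \<alpha>) / 2 * cdfG g x) else 0)"

definition uHPD :: "(real \<Rightarrow> real) \<Rightarrow> real \<Rightarrow> real \<Rightarrow> real" where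
  "uHPD g \<alpha> x = (if x \<le> d0 g \<alpha>
      then x - quantG g (\<alpha> * cdfG g x)
      else x + quantG g (1/2 + (1 - \<alpha>) / 2 * cdfG g x))"

definition coverage :: "(real \<Rightarrow> real) \<Rightarrow> real \<Rightarrow> real \<Rightarrow> real" where
  "coverage g \<alpha> \<theta> = measure (density lborel (\<lambda>x. ennreal (g (x - \<theta>))))
      {x. lHPD g \<alpha> x \<le> \<theta> \<and> \<theta> \<le> uHPD g \<alpha> x}"

definition linv :: "(real \<Rightarrow> real) \<Rightarrow> real \<Rightarrow> real \<Rightarrow> real" where
  "linv g \<alpha> \<theta> = Sup {x. \<theta> \<ge> lHPD g \<alpha> x}"

definition x1 :: "(real \<Rightarrow> real) \<Rightarrow> real \<Rightarrow> real \<Rightarrow> real" where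
  "x1 g \<alpha> \<theta> = linv g \<alpha> \<theta> - \<theta>"

end

theory Submission
  imports Defs "HOL-Probability.Probability"
begin

(* The coverage of the HPD interval at the point d2 is bounded below by exhibiting an
   interval of observations x on which the HPD interval certainly contains d2:
   for -d0 < x < l^{-1}(d2) we have l(x) <= d2 (since l is nondecreasing) and d2 <= u(x).
   Shifting by d2, the coverage is at least the G-mass of (-d0-d2, x1(d2)), which is
   G(x1(d2)) - G(-d0-d2) = G(x1(d2)) - alpha^2/(1+alpha). *)

section \<open>Log-concave densities\<close>

definition lower_mass :: "(real \<Rightarrow> real) \<Rightarrow> real \<Rightarrow> ennreal" where
  "lower_mass f x = (\<integral>\<^sup>+t. ennreal (f t) * indicator {..x} t \<partial>lborel)"

definition interval_mass :: "(real \<Rightarrow> real) \<Rightarrow> real \<Rightarrow> real \<Rightarrow> ennreal" where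
  "interval_mass f a h = (\<integral>\<^sup>+t. ennreal (f (a + t)) * indicator {0<..h} t \<partial>lborel)"

lemma lower_mass_split:
  assumes [measurable]: "f \<in> borel_measurable borel" and "0 \<le> h"
  shows "lower_mass f (a + h) = lower_mass f a + interval_mass f a h"
proof -
  have "lower_mass f (a + h) = (\<integral>\<^sup>+t. ennreal (f t) * indicator {..a} t
                                    + ennreal (f t) * indicator {a<..a+h} t \<partial>lborel)"
    unfolding lower_mass_def using \<open>0 \<le> h\<close> by (intro nn_integral_cong) (auto simp: indicator_def)
  also have "\<dots> = lower_mass f a + (\<integral>\<^sup>+t. ennreal (f t) * indicator {a<..a+h} t \<partial>lborel)"
    unfolding lower_mass_def by (rule nn_integral_add) auto
  also have "(\<integral>\<^sup>+t. ennreal (f t) * indicator {a<..a+h} t \<partial>lborel) = interval_mass f a h"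
    unfolding interval_mass_def
    by (subst nn_integral_real_affine[where c=1 and t=a]) (auto simp: indicator_def intro!: nn_integral_cong)
  finally show ?thesis .
qed

lemma lower_mass_reflect:
  assumes [measurable]: "f \<in> borel_measurable borel"
  shows "lower_mass f a = (\<integral>\<^sup>+s. ennreal (f (a - s)) * indicator {0..} s \<partial>lborel)"
  unfolding lower_mass_def
  by (subst nn_integral_real_affine[where c="-1" and t=a]) (auto simp: indicator_def intro!: nn_integral_cong)

lemma nn_integral_product_lborel:
  assumes [measurable]: "f \<in> borel_measurable borel" "k \<in> borel_measurable borel"
  shows "(\<integral>\<^sup>+s. f s \<partial>lborel) * (\<integral>\<^sup>+t. k t \<partial>lborel) = (\<integral>\<^sup>+s. (\<integral>\<^sup>+t. f s * k t \<partial>lborel) \<partial>lborel)"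
proof -
  have "(\<integral>\<^sup>+s. f s \<partial>lborel) * (\<integral>\<^sup>+t. k t \<partial>lborel) = (\<integral>\<^sup>+s. f s * (\<integral>\<^sup>+t. k t \<partial>lborel) \<partial>lborel)"
    by (rule nn_integral_multc[symmetric]) auto
  also have "\<dots> = (\<integral>\<^sup>+s. (\<integral>\<^sup>+t. f s * k t \<partial>lborel) \<partial>lborel)"
    by (intro nn_integral_cong nn_integral_cmult[symmetric]) auto
  finally show ?thesis .
qed

text \<open>The positivity set is convex, so the inner
  points lie in it whenever the outer ones do.\<close>

lemma logconcave_pair_product:
  fixes f :: "real \<Rightarrow> real"
  assumes lc: "concave_on {x. 0 < f x} (\<lambda>x. ln (f x))" and nonneg: "\<And>x. 0 \<le> f x"
    and le: "a \<le> b" "a \<le> c" and sum: "b + c = a + d"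
  shows "f a * f d \<le> f b * f c"
proof (cases "0 < f a \<and> 0 < f d")
  case False
  then have "f a * f d = 0" using nonneg by (metis less_eq_real_def mult_eq_0_iff)
  moreover have "0 \<le> f b * f c" using nonneg by simp
  ultimately show ?thesis by linarith
next
  case True
  show ?thesis
  proof (cases "a = d")
    case True
    then show ?thesis using le sum by (smt (verit))
  next
    case False
    then have lt: "a < d" using le sum by linarith
    define t where "t = (b - a) / (d - a)"
    have t01: "0 \<le> t" "t \<le> 1" using le sum lt by (auto simp: t_def field_simps)
    have step: "t * (d - a) = b - a" using lt by (simp add: t_def)
    have b: "b = (1 - t) *\<^sub>R a + t *\<^sub>R d" and c: "c = t *\<^sub>R a + (1 - t) *\<^sub>R d"
      using step sum by (simp_all add: algebra_simps)
    have cvx: "convex {x. 0 < f x}" using lc by (rule concave_on_imp_convex)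
    have pos: "0 < f b" "0 < f c"
      using convexD[OF cvx, of a d] True t01 unfolding b c by auto
    have "(1 - t) * ln (f a) + t * ln (f d) \<le> ln (f b)"
      unfolding b by (rule concave_onD[OF lc]) (use t01 True in auto)
    moreover have "t * ln (f a) + (1 - t) * ln (f d) \<le> ln (f c)"
      using concave_onD[OF lc, of "1 - t" a d] t01 True unfolding c by auto
    ultimately have "ln (f a * f d) \<le> ln (f b * f c)"
      using True pos by (simp add: ln_mult algebra_simps)
    then show ?thesis using True pos by simp
  qed
qed

text \<open>Splitting off the common part
  \<open>F q F a\<close>, it remains to compare \<open>F q\<close> times the mass of \<open>(a, a+h]\<close> with \<open>F a\<close> times the
  mass of \<open>(q, q+h]\<close>, which is the pair inequality integrated over both variables.\<close>

lemma lower_mass_total_positivity: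
  fixes f :: "real \<Rightarrow> real"
  assumes [measurable]: "f \<in> borel_measurable borel" and nonneg: "\<And>x. 0 \<le> f x"
    and lc: "concave_on {x. 0 < f x} (\<lambda>x. ln (f x))"
    and "q \<le> a" "0 \<le> h"
  shows "lower_mass f q * lower_mass f (a + h) \<le> lower_mass f a * lower_mass f (q + h)"
proof -
  have "lower_mass f q * interval_mass f a h \<le> lower_mass f a * interval_mass f q h"
    unfolding lower_mass_reflect[OF assms(1)] interval_mass_def
    apply (subst nn_integral_product_lborel, measurable)+
  proof (intro nn_integral_mono)
    fix s t
    show "ennreal (f (q - s)) * indicator {0..} s * (ennreal (f (a + t)) * indicator {0<..h} t)
        \<le> ennreal (f (a - s)) * indicator {0..} s * (ennreal (f (q + t)) * indicator {0<..h} t)"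
    proof (cases "s \<in> {0..} \<and> t \<in> {0<..h}")
      case True
      then have "f (q - s) * f (a + t) \<le> f (a - s) * f (q + t)"
        using \<open>q \<le> a\<close> by (intro logconcave_pair_product[OF lc nonneg]) auto
      then show ?thesis
        using True nonneg by (simp add: indicator_def ennreal_mult'[symmetric] ennreal_leI mult.assoc)
    qed (auto simp: indicator_def)
  qed
  then have "lower_mass f q * lower_mass f a + lower_mass f q * interval_mass f a h
           \<le> lower_mass f a * lower_mass f q + lower_mass f a * interval_mass f q h"
    by (simp add: mult.commute add_left_mono)
  then show ?thesis using lower_mass_split[OF assms(1) \<open>0 \<le> h\<close>] by (simp add: distrib_left)
qed

section \<open>Symmetric unimodal densities\<close>

locale symmetric_unimodal_density =
  fixes g :: "real \<Rightarrow> real"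
  assumes g_meas[measurable]: "g \<in> borel_measurable borel"
    and g_nonneg: "\<And>x. 0 \<le> g x"
    and g_int: "(\<integral>\<^sup>+ x. ennreal (g x) \<partial>lborel) = 1"
    and g_symm: "\<And>z. g (- z) = g z"
    and g_unimodal: "antimono_on {0..} g"
begin

abbreviation G :: "real \<Rightarrow> real" where "G \<equiv> cdfG g"
abbreviation Q :: "real \<Rightarrow> real" where "Q \<equiv> quantG g"

definition M :: "real measure" where "M = density lborel (\<lambda>t. ennreal (g t))"

lemma sets_M[simp]: "sets M = sets borel" and space_M[simp]: "space M = UNIV"
  by (auto simp: M_def)

lemma emeasure_M: "A \<in> sets borel \<Longrightarrow> emeasure M A = (\<integral>\<^sup>+t. ennreal (g t) * indicator A t \<partial>lborel)"
  unfolding M_def by (subst emeasure_density) auto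

sublocale dist: real_distribution M
proof -
  have "prob_space M" by (rule prob_spaceI) (use g_int in \<open>simp add: emeasure_M\<close>)
  then show "real_distribution M" by (simp add: real_distribution_def real_distribution_axioms_def)
qed

lemma cdfG_eq_cdf: "G = cdf M"
  by (rule ext) (simp add: cdfG_def cdf_def M_def)

lemma lower_mass_eq_cdfG: "lower_mass g x = ennreal (G x)"
proof -
  have "lower_mass g x = emeasure M {..x}" by (simp add: lower_mass_def emeasure_M)
  also have "\<dots> = ennreal (measure M {..x})" by (rule dist.emeasure_eq_measure)
  finally show ?thesis by (simp add: cdfG_def M_def)
qed

lemma measure_singleton: "measure M {x} = 0"
proof -
  have "emeasure M {x} = (\<integral>\<^sup>+t. ennreal (g t) * indicator {x} t \<partial>lborel)" by (simp add: emeasure_M)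
  also have "\<dots> = (\<integral>\<^sup>+t. 0 \<partial>(lborel::real measure))"
    using AE_lborel_singleton[of x] by (intro nn_integral_cong_AE) (auto elim: AE_mp)
  finally show ?thesis by (simp add: measure_def)
qed

lemma G_cont: "isCont G x"
  unfolding cdfG_eq_cdf using dist.isCont_cdf measure_singleton by simp

lemma G_mono: "x \<le> y \<Longrightarrow> G x \<le> G y"
  unfolding cdfG_eq_cdf using dist.cdf_nondecreasing by simp

lemma G_nonneg: "0 \<le> G x"
  unfolding cdfG_eq_cdf using dist.cdf_nonneg by simp

lemma G_le_1: "G x \<le> 1"
  unfolding cdfG_eq_cdf using dist.cdf_bounded_prob by simp

lemma G_at_top: "(G \<longlongrightarrow> 1) at_top"
  unfolding cdfG_eq_cdf using dist.cdf_lim_at_top_prob by simp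

lemma G_at_bot: "(G \<longlongrightarrow> 0) at_bot"
  unfolding cdfG_eq_cdf using dist.cdf_lim_at_bot by simp

lemma G_meas[measurable]: "G \<in> borel_measurable borel"
  by (rule borel_measurable_mono) (auto simp: mono_def G_mono)

lemma G_symm: "G (- x) = 1 - G x"
proof -
  have "emeasure M {..-x} = (\<integral>\<^sup>+t. ennreal (g t) * indicator {..-x} t \<partial>lborel)"
    by (simp add: emeasure_M)
  also have "\<dots> = (\<integral>\<^sup>+t. ennreal (g t) * indicator {x..} t \<partial>lborel)"
    by (subst nn_integral_real_affine[where c="-1" and t=0])
       (auto simp: g_symm indicator_def intro!: nn_integral_cong)
  also have "\<dots> = emeasure M {x..}" by (simp add: emeasure_M)
  finally have "G (- x) = measure M {x..}" by (simp add: measure_def cdfG_def M_def)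
  also have "{x..} = space M - {..<x}" by auto
  also have "measure M (space M - {..<x}) = 1 - measure M {..<x}"
    by (rule dist.prob_compl) auto
  also have "measure M {..<x} = G x"
  proof -
    have "measure M {..x} = measure M ({..<x} \<union> {x})" by (metis ivl_disj_un_singleton(2))
    also have "\<dots> = measure M {..<x} + measure M {x}"
      by (rule dist.finite_measure_Union) auto
    finally show ?thesis using measure_singleton by (simp add: cdfG_def M_def)
  qed
  finally show ?thesis .
qed

lemma G_0: "G 0 = 1/2"
  using G_symm[of 0] by simp

text \<open>Since \<open>G\<close> is continuous, for \<open>0 < t < 1\<close> the infimum defining \<open>Q t\<close> is attained, so \<open>Q\<close>
  is a right inverse of \<open>G\<close> and forms a Galois connection with it.\<close>

context
  fixes t :: real assumes t: "0 < t" "t < 1"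
begin

lemma exists_G_above: "\<exists>x. t < G x"
  using order_tendstoD(1)[OF G_at_top] t by (auto simp: eventually_at_top_linorder)

lemma exists_G_below: "\<exists>x. G x < t"
  using order_tendstoD(2)[OF G_at_bot] t by (auto simp: eventually_at_bot_linorder)

lemma G_below_le: "G x0 < t \<Longrightarrow> t \<le> G y \<Longrightarrow> x0 \<le> y"
  using G_mono[of y x0] by (cases "x0 \<le> y") auto

lemma quantile_set:
  "{x. t \<le> G x} \<noteq> {}" "bdd_below {x. t \<le> G x}" "closed {x. t \<le> G x}"
proof -
  show "{x. t \<le> G x} \<noteq> {}" using exists_G_above by (auto intro: less_imp_le)
  obtain x0 where "G x0 < t" using exists_G_below by blast
  then show "bdd_below {x. t \<le> G x}" using G_below_le by (auto simp: bdd_below_def)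
  have "continuous_on UNIV G" using G_cont by (simp add: continuous_on_eq_continuous_at)
  then show "closed {x. t \<le> G x}"
    by (intro closed_Collect_le) (auto intro: continuous_intros)
qed

lemma G_Q_ge: "t \<le> G (Q t)"
  using closed_contains_Inf[OF quantile_set] by (simp add: quantG_def)

lemma Q_le_iff: "Q t \<le> y \<longleftrightarrow> t \<le> G y"
proof
  assume "Q t \<le> y" then show "t \<le> G y" using G_Q_ge G_mono order_trans by blast
next
  assume "t \<le> G y" then show "Q t \<le> y"
    unfolding quantG_def by (intro cInf_lower quantile_set(2)) auto
qed

lemma G_Q: "G (Q t) = t"
proof -
  obtain x0 where x0: "G x0 < t" using exists_G_below by blast
  have "x0 \<le> Q t" using G_below_le[OF x0 G_Q_ge] .
  then obtain z where z: "z \<le> Q t" "G z = t"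
    using IVT[of G x0 t "Q t"] x0 G_Q_ge G_cont by auto
  then have "Q t \<le> z" using Q_le_iff by simp
  with z show ?thesis by simp
qed

end

lemma Q_mono: "0 < t1 \<Longrightarrow> t1 \<le> t2 \<Longrightarrow> t2 < 1 \<Longrightarrow> Q t1 \<le> Q t2"
  using Q_le_iff[of t1 "Q t2"] G_Q[of t2] by simp

text \<open>\<open>Q\<close> is constant outside \<open>(0, 1)\<close> and monotone inside, hence Borel measurable.\<close>

lemma Q_meas[measurable]: "Q \<in> borel_measurable borel"
proof (rule borel_measurable_piecewise_mono[of "{{..0}, {0<..<1}, {1}, {1<..}}"])
  have "Q t = Inf UNIV" if "t \<le> 0" for t
    unfolding quantG_def using that G_nonneg by (metis (mono_tags) UNIV_eq_I mem_Collect_eq order_trans)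
  then have "mono_on {..0} Q" by (auto simp: mono_on_def)
  moreover have "Q t = Inf {}" if "1 < t" for t
    unfolding quantG_def using that G_le_1 by (metis (mono_tags) empty_Collect_eq not_le order_trans)
  then have "mono_on {1<..} Q" by (auto simp: mono_on_def)
  moreover have "mono_on {0<..<1} Q" by (auto simp: mono_on_def intro: Q_mono)
  ultimately show "mono_on c Q" if "c \<in> {{..0}, {0<..<1}, {1}, {1<..}}" for c
    using that by (auto simp: mono_on_def)
qed auto

lemma g_abs_antimono: "\<bar>x\<bar> \<le> \<bar>y\<bar> \<Longrightarrow> g y \<le> g x"
proof -
  have g_abs: "g \<bar>z\<bar> = g z" for z by (cases "0 \<le> z") (auto simp: g_symm)
  assume "\<bar>x\<bar> \<le> \<bar>y\<bar>"
  then have "g \<bar>y\<bar> \<le> g \<bar>x\<bar>" using g_unimodal by (auto simp: monotone_on_def)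
  then show ?thesis by (simp add: g_abs)
qed

lemma interval_mass_eq: "0 \<le> h \<Longrightarrow> interval_mass g a h = ennreal (G (a + h) - G a)"
  using lower_mass_split[OF g_meas, of h a] G_nonneg
  by (simp add: lower_mass_eq_cdfG ennreal_minus[symmetric])

lemma G_increment_antimono:
  assumes "0 \<le> a" "a \<le> a'" "0 \<le> h"
  shows "G (a' + h) - G a' \<le> G (a + h) - G a"
proof -
  have "interval_mass g a' h \<le> interval_mass g a h"
    unfolding interval_mass_def
  proof (intro nn_integral_mono)
    fix t
    have "g (a' + t) \<le> g (a + t)" if "0 < t" using assms that by (intro g_abs_antimono) auto
    then show "ennreal (g (a' + t)) * indicator {0<..h} t \<le> ennreal (g (a + t)) * indicator {0<..h} t"
      by (simp add: indicator_def ennreal_leI)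
  qed
  then show ?thesis using interval_mass_eq[OF assms(3)] G_mono[of a "a + h"] assms
    by (simp add: ennreal_le_iff)
qed

text \<open>On the negative half-line the cdf increases strictly once it is positive: the support of
  a symmetric unimodal density is an interval, so \<open>G\<close> has no flat parts inside it.\<close>

lemma G_strict_mono_left:
  assumes "z < w" "w \<le> 0" "0 < G z"
  shows "G z < G w"
proof -
  have "\<exists>y\<le>z. 0 < g y"
  proof (rule ccontr)
    assume "\<not> (\<exists>y\<le>z. 0 < g y)"
    then have "g t = 0" if "t \<le> z" for t using that g_nonneg by (metis antisym not_le)
    then have "lower_mass g z = 0" unfolding lower_mass_def
      by (intro nn_integral_zero' AE_I2) (auto simp: indicator_def)
    then show False using assms(3) by (simp add: lower_mass_eq_cdfG)
  qed
  then obtain y where y: "y \<le> z" "0 < g y" by blast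
  have "(\<integral>\<^sup>+t. ennreal (g y) * indicator {0<..w-z} t \<partial>lborel) \<le> interval_mass g z (w - z)"
    unfolding interval_mass_def
  proof (intro nn_integral_mono)
    fix t
    have "g y \<le> g (z + t)" if "0 < t" "t \<le> w - z" using y assms that by (intro g_abs_antimono) auto
    then show "ennreal (g y) * indicator {0<..w-z} t \<le> ennreal (g (z + t)) * indicator {0<..w-z} t"
      by (simp add: indicator_def ennreal_leI)
  qed
  then have "ennreal (g y * (w - z)) \<le> ennreal (G w - G z)"
    using assms y interval_mass_eq[of "w - z" z]
    by (simp add: nn_integral_cmult_indicator ennreal_mult'')
  then have "g y * (w - z) \<le> G w - G z"
    using G_mono[of z w] assms by (simp add: ennreal_le_iff)
  then show ?thesis using y assms by (smt (verit) mult_pos_pos)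
qed

lemma lHPD_meas[measurable]: "lHPD g \<alpha> \<in> borel_measurable borel"
  unfolding lHPD_def[abs_def] by measurable

lemma uHPD_meas[measurable]: "uHPD g \<alpha> \<in> borel_measurable borel"
  unfolding uHPD_def[abs_def] by measurable

text \<open>Under \<open>P\<^sub>\<theta>\<close>, \<open>X - \<theta>\<close> has density \<open>g\<close>: the coverage is the \<open>M\<close>-probability of the
  acceptance set shifted by \<open>\<theta>\<close>.\<close>

lemma coverage_shift:
  "coverage g \<alpha> \<theta> = measure M {t. lHPD g \<alpha> (t + \<theta>) \<le> \<theta> \<and> \<theta> \<le> uHPD g \<alpha> (t + \<theta>)}"
proof -
  define A where "A = {x. lHPD g \<alpha> x \<le> \<theta> \<and> \<theta> \<le> uHPD g \<alpha> x}"
  have A[measurable]: "A \<in> sets borel" unfolding A_def by measurable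
  have "emeasure (density lborel (\<lambda>x. ennreal (g (x - \<theta>)))) A
      = (\<integral>\<^sup>+x. ennreal (g (x - \<theta>)) * indicator A x \<partial>lborel)"
    by (subst emeasure_density) auto
  also have "\<dots> = (\<integral>\<^sup>+t. ennreal (g t) * indicator {t. t + \<theta> \<in> A} t \<partial>lborel)"
    by (subst nn_integral_real_affine[where c=1 and t=\<theta>])
       (auto simp: indicator_def add.commute intro!: nn_integral_cong)
  also have "\<dots> = emeasure M {t. t + \<theta> \<in> A}" by (simp add: emeasure_M)
  finally show ?thesis by (simp add: coverage_def measure_def A_def)
qed

lemma coverage_le_1: "coverage g \<alpha> \<theta> \<le> 1"
  unfolding coverage_shift by (rule dist.prob_le_1)

end

section \<open>The HPD interval and its coverage at \<open>d\<^sub>2\<close>\<close>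

locale hpd_setting = symmetric_unimodal_density +
  fixes \<alpha> :: real
  assumes g_logconcave: "concave_on {x. 0 < g x} (\<lambda>x. ln (g x))"
    and alpha_pos: "0 < \<alpha>" and alpha_lt_1: "\<alpha> < 1"
begin

abbreviation D0 :: real where "D0 \<equiv> d0 g \<alpha>"

definition tail_level :: real where "tail_level = \<alpha>\<^sup>2 / (1 + \<alpha>)"

definition d2_hpd :: real where "d2_hpd = Q (1 - tail_level) - D0"

definition level :: "real \<Rightarrow> real" where "level x = 1/2 + (1 - \<alpha>) / 2 * G x"

lemma lHPD_eq: "lHPD g \<alpha> x = (if D0 < x then x - Q (level x) else 0)"
  by (simp add: lHPD_def level_def)

lemma uHPD_eq: "uHPD g \<alpha> x = (if x \<le> D0 then x - Q (\<alpha> * G x) else x + Q (level x))"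
  by (simp add: uHPD_def level_def)

lemma G_total_positivity: "q \<le> a \<Longrightarrow> 0 \<le> h \<Longrightarrow> G q * G (a + h) \<le> G a * G (q + h)"
  using lower_mass_total_positivity[OF g_meas g_nonneg g_logconcave, of q a h] G_nonneg
  by (simp add: lower_mass_eq_cdfG ennreal_mult'[symmetric] ennreal_le_iff)

lemma levels_in_range:
  "0 < 1 / (1 + \<alpha>)" "1 / (1 + \<alpha>) < 1" "0 < \<alpha> / (1 + \<alpha>)" "\<alpha> / (1 + \<alpha>) < 1"
  "0 < tail_level" "1 / (1 + \<alpha>) \<le> 1 - tail_level" "1 - tail_level < 1"
proof -
  have "\<alpha> * \<alpha> < 1 + \<alpha>" using alpha_pos alpha_lt_1 mult_left_le_one_le[of \<alpha> \<alpha>] by linarith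
  then show "0 < tail_level" "1 / (1 + \<alpha>) \<le> 1 - tail_level" "1 - tail_level < 1"
    using alpha_pos alpha_lt_1 by (auto simp: tail_level_def field_simps power2_eq_square)
qed (use alpha_pos alpha_lt_1 in \<open>auto simp: field_simps\<close>)

lemma G_d0: "G D0 = 1 / (1 + \<alpha>)"
  using G_Q levels_in_range by (simp add: d0_def)

lemma G_neg_d0: "G (- D0) = \<alpha> / (1 + \<alpha>)"
  using G_symm[of D0] alpha_pos by (simp add: G_d0 field_simps)

lemma d0_pos: "0 < D0"
proof -
  have "1/2 < 1 / (1 + \<alpha>)" using alpha_pos alpha_lt_1 by (simp add: field_simps)
  then have "G 0 < G D0" using G_0 G_d0 by simp
  then show ?thesis using G_mono[of D0 0] by (cases "D0 \<le> 0") auto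
qed

lemma d2_nonneg: "0 \<le> d2_hpd"
  using Q_mono[of "1 / (1 + \<alpha>)" "1 - tail_level"] levels_in_range by (simp add: d2_hpd_def d0_def)

lemma G_lower_endpoint: "G (- D0 - d2_hpd) = tail_level"
  using G_symm[of "Q (1 - tail_level)"] G_Q levels_in_range by (simp add: d2_hpd_def)

lemma level_bounds:
  assumes "D0 < x"
  shows "1 / (1 + \<alpha>) \<le> level x" "level x < 1" "level x \<le> G x"
proof -
  have Gx: "1 / (1 + \<alpha>) \<le> G x" using G_mono[of D0 x] assms G_d0 by simp
  have "1 / (1 + \<alpha>) = 1/2 + (1 - \<alpha>) / 2 * (1 / (1 + \<alpha>))" using alpha_pos by (simp add: field_simps)
  also have "\<dots> \<le> level x"
    unfolding level_def using Gx alpha_lt_1 by (intro add_left_mono mult_left_mono) auto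
  finally show "1 / (1 + \<alpha>) \<le> level x" .
  have "(1 - \<alpha>) / 2 * G x \<le> (1 - \<alpha>) / 2"
    using G_le_1[of x] alpha_lt_1 by (intro mult_left_le) auto
  moreover have "(1 - \<alpha>) / 2 < 1/2" using alpha_pos by simp
  ultimately show "level x < 1" unfolding level_def by linarith
  have "1 \<le> (1 + \<alpha>) * G x" using Gx alpha_pos by (simp add: field_simps)
  then show "level x \<le> G x" unfolding level_def by (simp add: field_simps)
qed

lemma level_in_range: "D0 < x \<Longrightarrow> 0 < level x \<and> level x < 1"
  using level_bounds[of x] levels_in_range(1) by linarith

text \<open>For \<open>d\<^sub>0 < x \<le> y\<close> this is the statement
  \<open>Q(level y) \<le> Q(level x) + (y - x)\<close>: the level grows by at most \<open>G y - G x\<close>, and this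
  increment of \<open>G\<close> is at most the increment over \<open>[Q(level x), Q(level x) + (y - x)]\<close>
  because \<open>0 \<le> Q(level x) \<le> x\<close> and increments of \<open>G\<close> shrink on \<open>[0, \<infinity>)\<close>.\<close>

lemma lHPD_mono:
  assumes xy: "x \<le> y"
  shows "lHPD g \<alpha> x \<le> lHPD g \<alpha> y"
proof (cases "D0 < x")
  case False
  then show ?thesis
    using Q_le_iff level_bounds(3) level_in_range by (auto simp: lHPD_eq)
next
  case True
  then have y: "D0 < y" using xy by simp
  define q where "q = Q (level x)"
  have Gq: "G q = level x" using G_Q level_in_range[OF True] by (simp add: q_def)
  have q_nonneg: "0 \<le> q"
    using Q_mono[of "1 / (1 + \<alpha>)" "level x"] levels_in_range level_bounds[OF True] d0_pos
    by (simp add: q_def d0_def)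
  have q_le: "q \<le> x" using Q_le_iff level_bounds[OF True] level_in_range[OF True] by (simp add: q_def)
  have "level y - level x = (1 - \<alpha>) / 2 * (G y - G x)" by (simp add: level_def field_simps)
  also have "\<dots> \<le> G y - G x"
    using G_mono[OF xy] alpha_pos alpha_lt_1 by (intro mult_left_le_one_le) auto
  also have "\<dots> \<le> G (q + (y - x)) - G q"
    using G_increment_antimono[OF q_nonneg q_le, of "y - x"] xy by simp
  finally have "level y \<le> G (q + (y - x))" using Gq by simp
  then have "Q (level y) \<le> q + (y - x)" using Q_le_iff level_in_range[OF y] by simp
  then show ?thesis using True y by (simp add: lHPD_eq q_def)
qed

text \<open>For \<open>-d\<^sub>0 < x \<le> d\<^sub>0\<close>, total positivity applied to the points \<open>-d\<^sub>0 - d\<^sub>2 \<le> -d\<^sub>0\<close> and the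
  shift \<open>x + d\<^sub>0\<close> gives \<open>\<alpha> G(x) \<le> G(x - d\<^sub>2)\<close>, i.e. \<open>d\<^sub>2 \<le> x - Q(\<alpha> G x) = u(x)\<close>.\<close>

lemma uHPD_ge_d2_center:
  assumes x: "- D0 < x" "x \<le> D0"
  shows "d2_hpd \<le> uHPD g \<alpha> x"
proof -
  have "G (- D0 - d2_hpd) * G (- D0 + (x + D0)) \<le> G (- D0) * G (- D0 - d2_hpd + (x + D0))"
    using x d2_nonneg by (intro G_total_positivity) auto
  then have "\<alpha> / (1 + \<alpha>) * (\<alpha> * G x) \<le> \<alpha> / (1 + \<alpha>) * G (x - d2_hpd)"
    by (simp add: G_lower_endpoint G_neg_d0 tail_level_def power2_eq_square algebra_simps)
  then have le: "\<alpha> * G x \<le> G (x - d2_hpd)"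
    using mult_le_cancel_left_pos[OF levels_in_range(3)] by blast
  have "0 < G x" using G_mono[of "- D0" x] x G_neg_d0 levels_in_range(3) by simp
  moreover have "G x \<le> 1" by (rule G_le_1)
  ultimately have "0 < \<alpha> * G x" "\<alpha> * G x < 1"
    using alpha_pos alpha_lt_1 by (auto intro: mult_pos_pos mult_le_one order.strict_trans1[of _ \<alpha>])
  then have "Q (\<alpha> * G x) \<le> x - d2_hpd" using Q_le_iff le by simp
  then show ?thesis using x by (simp add: uHPD_eq)
qed

text \<open>The \<open>\<alpha>/(1 + \<alpha>)\<close>-quantile is \<open>-d\<^sub>0\<close> exactly: it cannot lie further left because \<open>G\<close>
  increases strictly on the negative part of the support.\<close>

lemma Q_lower_level: "Q (\<alpha> / (1 + \<alpha>)) = - D0"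
proof -
  have "Q (\<alpha> / (1 + \<alpha>)) \<le> - D0" using Q_le_iff G_neg_d0 levels_in_range by simp
  moreover have "\<not> Q (\<alpha> / (1 + \<alpha>)) < - D0"
    using G_strict_mono_left[of "Q (\<alpha> / (1 + \<alpha>))" "- D0"] G_Q G_neg_d0 levels_in_range d0_pos
    by auto
  ultimately show ?thesis by simp
qed

text \<open>The central case gives \<open>d\<^sub>2 \<le> u(d\<^sub>0) = 2 d\<^sub>0\<close>, and for
  \<open>x > d\<^sub>0\<close> we have \<open>u(x) = x + Q(level x) \<ge> 2 d\<^sub>0\<close> because \<open>level x \<ge> 1/(1 + \<alpha>)\<close>.\<close>

lemma uHPD_ge_d2:
  assumes "- D0 < x"
  shows "d2_hpd \<le> uHPD g \<alpha> x"
proof (cases "x \<le> D0")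
  case True
  then show ?thesis using uHPD_ge_d2_center assms by simp
next
  case False
  have "d2_hpd \<le> uHPD g \<alpha> D0" using uHPD_ge_d2_center d0_pos by simp
  then have "d2_hpd \<le> 2 * D0" by (simp add: uHPD_eq G_d0 Q_lower_level)
  moreover have "D0 \<le> Q (level x)"
    using Q_mono[of "1 / (1 + \<alpha>)" "level x"] levels_in_range level_bounds[of x] False
    by (simp add: d0_def)
  ultimately show ?thesis using False by (simp add: uHPD_eq)
qed

text \<open>Lower bound for the coverage at any \<open>\<theta> \<ge> 0\<close> with \<open>\<theta> \<le> u(x)\<close> for all \<open>x > c\<close>: every
  \<open>x \<in> (c, l\<^sup>-\<^sup>1(\<theta>))\<close> has \<open>l(x) \<le> \<theta> \<le> u(x)\<close>, since \<open>l\<close> is nondecreasing.\<close>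

lemma coverage_lower_bound:
  assumes "0 \<le> \<theta>" and u_ge: "\<And>x. c < x \<Longrightarrow> \<theta> \<le> uHPD g \<alpha> x"
  shows "G (x1 g \<alpha> \<theta>) - G (c - \<theta>) \<le> coverage g \<alpha> \<theta>"
proof -
  define a where "a = c - \<theta>"
  define b where "b = x1 g \<alpha> \<theta>"
  define S where "S = {t. lHPD g \<alpha> (t + \<theta>) \<le> \<theta> \<and> \<theta> \<le> uHPD g \<alpha> (t + \<theta>)}"
  have S_meas: "S \<in> sets M" unfolding S_def by measurable
  have sub: "{a<..<b} \<subseteq> S"
  proof
    fix t assume t: "t \<in> {a<..<b}"
    have "0 \<in> {x. lHPD g \<alpha> x \<le> \<theta>}" using d0_pos \<open>0 \<le> \<theta>\<close> by (simp add: lHPD_eq)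
    moreover have "t + \<theta> < Sup {x. lHPD g \<alpha> x \<le> \<theta>}"
      using t by (simp add: b_def x1_def linv_def)
    ultimately obtain y where "lHPD g \<alpha> y \<le> \<theta>" "t + \<theta> < y"
      using less_cSupD[of "{x. lHPD g \<alpha> x \<le> \<theta>}"] by blast
    then have "lHPD g \<alpha> (t + \<theta>) \<le> \<theta>" using lHPD_mono[of "t + \<theta>" y] by simp
    moreover have "\<theta> \<le> uHPD g \<alpha> (t + \<theta>)" using u_ge t by (simp add: a_def)
    ultimately show "t \<in> S" by (simp add: S_def)
  qed
  have "G b = measure M {..b}" by (simp add: cdfG_def M_def)
  also have "\<dots> \<le> measure M ({..a} \<union> {a<..<b} \<union> {b})"
    by (intro dist.finite_measure_mono) auto
  also have "\<dots> \<le> measure M {..a} + measure M {a<..<b} + measure M {b}"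
    using measure_Un_le[of "{..a}" M "{a<..<b}"] measure_Un_le[of "{..a} \<union> {a<..<b}" M "{b}"]
    by simp
  also have "\<dots> \<le> G a + measure M S"
    using dist.finite_measure_mono[OF sub S_meas] measure_singleton[of b]
    by (simp add: cdfG_def M_def)
  finally show ?thesis by (simp add: coverage_shift a_def b_def S_def)
qed

end

theorem mainTheorem6:
  fixes g :: "real \<Rightarrow> real" and \<alpha> :: real
  assumes g_meas: "g \<in> borel_measurable borel"
    and g_nonneg: "\<And>x. 0 \<le> g x"
    and g_int: "(\<integral>\<^sup>+ x. ennreal (g x) \<partial>lborel) = 1"
    and g_symm: "\<And>z. g (- z) = g z"
    and g_unimodal: "antimono_on {0..} g"
    and g_logconcave: "concave_on {x. 0 < g x} (\<lambda>x. ln (g x))"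
    and alpha: "0 < \<alpha>" "\<alpha> < 1"
  defines "d2 \<equiv> quantG g (1 - \<alpha>\<^sup>2 / (1 + \<alpha>)) - d0 g \<alpha>"
  shows "(SUP \<theta>\<in>{0..}. coverage g \<alpha> \<theta>) \<ge> coverage g \<alpha> d2
       \<and> coverage g \<alpha> d2 \<ge> cdfG g (x1 g \<alpha> d2) - \<alpha>\<^sup>2 / (1 + \<alpha>)"
proof -
  interpret hpd_setting g \<alpha> by unfold_locales (fact+)
  have d2: "d2 = d2_hpd" by (simp add: d2_def d2_hpd_def tail_level_def)
  have bdd: "bdd_above (coverage g \<alpha> ` {0..})"
    using coverage_le_1 by (auto simp: bdd_above_def)
  have sup: "coverage g \<alpha> d2_hpd \<le> (SUP \<theta>\<in>{0..}. coverage g \<alpha> \<theta>)"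
    using d2_nonneg bdd by (intro cSUP_upper) auto
  have low: "G (x1 g \<alpha> d2_hpd) - tail_level \<le> coverage g \<alpha> d2_hpd"
    using coverage_lower_bound[OF d2_nonneg, of "- D0"] uHPD_ge_d2 G_lower_endpoint by simp
  show ?thesis using sup low unfolding d2 tail_level_def by simp
qed

end
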